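(* Consider, under stochastic mass-action kinetics, the reaction networks W3: $S_1\underset{\beta}{\overset{\alpha}{\rightleftharpoons}}S_2$, $2S_1\underset{\lambda_2}{\overset{\lambda_1}{\rightleftharpoons}}2S_2$, and W4: $2S_1\underset{\lambda_5}{\overset{\lambda_3}{\rightleftharpoons}}S_1+S_2$, $2S_1\underset{\lambda_2}{\overset{\lambda_1}{\rightleftharpoons}}2S_2$. For each of them and every positive rate vector $\kappa$, $(\mathcal{G},\kappa)$ has product-form stationary distribution if and only if $(\mathcal{G},\kappa)$ is complex balanced.
   Context: Stochastic mass-action kinetics: reaction $\nu\to\nu'$ with rate $\kappa$ moves state $x\in\mathbb{Z}^2_{\ge0}$ to $x+\nu'-\nu$ with intensity $\kappa\frac{x!}{(x-\nu)!}\mathbf{1}_{x\ge\nu}$, $z!=z_1!z_2!$. $(\mathcal{G},\kappa)$ has product-form stationary distribution if there are $f_1,f_2:\mathbb{Z}_{\ge0}\to\mathbb{R}_{>0}$ such that on every positive recurrent irreducible component $\Gamma$ (nonempty set closed under reachability with every state reachable from every other) the stationary distribution is $\pi_\Gamma(x)=Z_\Gamma^{-1}f_1(x_1)f_2(x_2)$. $(\mathcal{G},\kappa)$ is complex balanced if there is $c\in\mathbb{R}^2_{>0}$ such that for every complex $\eta$, $\sum_{\nu\to\eta}\kappa_{\nu\to\eta}c^\nu=\sum_{\eta\to\nu'}\kappa_{\eta\to\nu'}c^\eta$. *)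

theory Defs
  imports "HOL-Analysis.Analysis"
begin

text \<open>States and complexes live in Z^2_{>=0}, rendered as nat * nat.
  A reaction is a pair (source complex nu, product complex nu').\<close>

type_synonym state = "nat \<times> nat"
type_synonym reaction = "state \<times> state"

definition cle :: "state \<Rightarrow> state \<Rightarrow> bool" where
  "cle \<nu> x \<longleftrightarrow> fst \<nu> \<le> fst x \<and> snd \<nu> \<le> snd x"

text \<open>x + nu' - nu (only used when nu <= x)\<close>
definition fire :: "reaction \<Rightarrow> state \<Rightarrow> state" where
  "fire r x = (fst x - fst (fst r) + fst (snd r), snd x - snd (fst r) + snd (snd r))"

definition intensity :: "(reaction \<Rightarrow> real) \<Rightarrow> reaction \<Rightarrow> state \<Rightarrow> real" where
  "intensity \<kappa> r x =
     (if cle (fst r) x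
      then \<kappa> r * (fact (fst x) / fact (fst x - fst (fst r)))
                 * (fact (snd x) / fact (snd x - snd (fst r)))
      else 0)"

definition step :: "reaction set \<Rightarrow> (reaction \<Rightarrow> real) \<Rightarrow> state \<Rightarrow> state \<Rightarrow> bool" where
  "step R \<kappa> x y \<longleftrightarrow> (\<exists>r\<in>R. intensity \<kappa> r x > 0 \<and> y = fire r x)"

definition reach :: "reaction set \<Rightarrow> (reaction \<Rightarrow> real) \<Rightarrow> state \<Rightarrow> state \<Rightarrow> bool" where
  "reach R \<kappa> = (step R \<kappa>)\<^sup>*\<^sup>*"

definition irreducible_component :: "reaction set \<Rightarrow> (reaction \<Rightarrow> real) \<Rightarrow> state set \<Rightarrow> bool" where
  "irreducible_component R \<kappa> \<Gamma> \<longleftrightarrow>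
     \<Gamma> \<noteq> {} \<and>
     (\<forall>x\<in>\<Gamma>. \<forall>y. reach R \<kappa> x y \<longrightarrow> y \<in> \<Gamma>) \<and>
     (\<forall>x\<in>\<Gamma>. \<forall>y\<in>\<Gamma>. reach R \<kappa> x y)"

text \<open>The inflow into y is the finite sum
  over reactions r whose firing from the state y - nu' + nu lands in y.\<close>
definition stationary :: "reaction set \<Rightarrow> (reaction \<Rightarrow> real) \<Rightarrow> state set \<Rightarrow> (state \<Rightarrow> real) \<Rightarrow> bool" where
  "stationary R \<kappa> \<Gamma> \<pi> \<longleftrightarrow>
     (\<forall>x. \<pi> x \<ge> 0) \<and> (\<forall>x. x \<notin> \<Gamma> \<longrightarrow> \<pi> x = 0) \<and> (\<pi> has_sum 1) \<Gamma> \<and>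
     (\<forall>y\<in>\<Gamma>. \<pi> y * (\<Sum>r\<in>R. intensity \<kappa> r y) =
        (\<Sum>r\<in>R. if cle (snd r) y
                  then (let x = (fst y - fst (snd r) + fst (fst r), snd y - snd (snd r) + snd (fst r))
                        in \<pi> x * intensity \<kappa> r x)
                  else 0))"

definition pos_rec_component :: "reaction set \<Rightarrow> (reaction \<Rightarrow> real) \<Rightarrow> state set \<Rightarrow> bool" where
  "pos_rec_component R \<kappa> \<Gamma> \<longleftrightarrow>
     irreducible_component R \<kappa> \<Gamma> \<and> (\<exists>\<pi>. stationary R \<kappa> \<Gamma> \<pi>)"

definition product_form :: "reaction set \<Rightarrow> (reaction \<Rightarrow> real) \<Rightarrow> bool" where
  "product_form R \<kappa> \<longleftrightarrow>
     (\<exists>f1 f2 :: nat \<Rightarrow> real. (\<forall>n. f1 n > 0) \<and> (\<forall>n. f2 n > 0) \<and>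
        (\<forall>\<Gamma>. pos_rec_component R \<kappa> \<Gamma> \<longrightarrow>
           (\<exists>Z > 0. \<forall>\<pi>. stationary R \<kappa> \<Gamma> \<pi> \<longrightarrow>
               (\<forall>x\<in>\<Gamma>. \<pi> x = f1 (fst x) * f2 (snd x) / Z))))"

definition complexes :: "reaction set \<Rightarrow> state set" where
  "complexes R = fst ` R \<union> snd ` R"

definition cpow :: "real \<times> real \<Rightarrow> state \<Rightarrow> real" where
  "cpow c \<nu> = fst c ^ fst \<nu> * snd c ^ snd \<nu>"

definition complex_balanced :: "reaction set \<Rightarrow> (reaction \<Rightarrow> real) \<Rightarrow> bool" where
  "complex_balanced R \<kappa> \<longleftrightarrow>
     (\<exists>c. fst c > 0 \<and> snd c > 0 \<and>
        (\<forall>\<eta>\<in>complexes R.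
           (\<Sum>r\<in>{r\<in>R. snd r = \<eta>}. \<kappa> r * cpow c (fst r)) =
           (\<Sum>r\<in>{r\<in>R. fst r = \<eta>}. \<kappa> r * cpow c \<eta>)))"

text \<open>W3: S1 <=> S2 (alpha, beta), 2S1 <=> 2S2 (lambda1, lambda2).\<close>
definition W3 :: "reaction set" where
  "W3 = {((1,0),(0,1)), ((0,1),(1,0)), ((2,0),(0,2)), ((0,2),(2,0))}"

text \<open>W4: 2S1 <=> S1+S2 (lambda3, lambda5), 2S1 <=> 2S2 (lambda1, lambda2).\<close>
definition W4 :: "reaction set" where
  "W4 = {((2,0),(1,1)), ((1,1),(2,0)), ((2,0),(0,2)), ((0,2),(2,0))}"

end

theory Submission
  imports Defs
begin

text \<open>Both networks are reversible and conserve the total number of molecules, so every level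
  \<open>x\<^sub>1 + x\<^sub>2 = N\<close> with \<open>N \<ge> 1\<close> (W3) resp. \<open>N \<ge> 2\<close> (W4) is a finite irreducible class.
  Complex balance of these networks amounts to detailed balance (each linkage class is a tree of
  reversible reactions); then the Poisson product \<open>c\<^sup>x / x!\<close> satisfies detailed balance, and a
  maximum principle for \<open>\<pi> / \<mu>\<close> shows that it is the only stationary distribution on each class.
  Conversely, the stationary distributions on the three lowest irreducible levels are known
  explicitly.  Product form forces a cross-ratio identity between them, which factors as
  \<open>(\<alpha>\<^sup>2\<lambda>\<^sub>2 - \<beta>\<^sup>2\<lambda>\<^sub>1) Q\<close> for W3 and \<open>(\<lambda>\<^sub>3\<^sup>2\<lambda>\<^sub>2 - \<lambda>\<^sub>5\<^sup>2\<lambda>\<^sub>1) Q\<close> for W4 with \<open>Q > 0\<close>; the vanishing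
  of the first factor is exactly complex balance.\<close>

definition level :: "nat \<Rightarrow> state set" where
  "level N = {x. fst x + snd x = N}"

definition conservative :: "reaction set \<Rightarrow> bool" where
  "conservative R \<longleftrightarrow> (\<forall>r\<in>R. fst (fst r) + snd (fst r) = fst (snd r) + snd (snd r))"

definition reversible :: "reaction set \<Rightarrow> bool" where
  "reversible R \<longleftrightarrow> (\<forall>r\<in>R. prod.swap r \<in> R)"

definition inflow :: "reaction set \<Rightarrow> (reaction \<Rightarrow> real) \<Rightarrow> (state \<Rightarrow> real) \<Rightarrow> state \<Rightarrow> real" where
  "inflow R \<kappa> w y =
     (\<Sum>r\<in>R. if cle (snd r) y
             then (let x = (fst y - fst (snd r) + fst (fst r), snd y - snd (snd r) + snd (fst r))
                   in w x * intensity \<kappa> r x)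
             else 0)"

definition balanced_on :: "reaction set \<Rightarrow> (reaction \<Rightarrow> real) \<Rightarrow> (state \<Rightarrow> real) \<Rightarrow> state set \<Rightarrow> bool" where
  "balanced_on R \<kappa> w \<Gamma> \<longleftrightarrow> (\<forall>y\<in>\<Gamma>. w y * (\<Sum>r\<in>R. intensity \<kappa> r y) = inflow R \<kappa> w y)"

definition detailed_balanced :: "reaction set \<Rightarrow> (reaction \<Rightarrow> real) \<Rightarrow> bool" where
  "detailed_balanced R \<kappa> \<longleftrightarrow>
     (\<exists>c. fst c > 0 \<and> snd c > 0 \<and> (\<forall>r\<in>R. \<kappa> r * cpow c (fst r) = \<kappa> (prod.swap r) * cpow c (snd r)))"

definition poisson_weight :: "real \<times> real \<Rightarrow> state \<Rightarrow> real" where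
  "poisson_weight c x = fst c ^ fst x / fact (fst x) * (snd c ^ snd x / fact (snd x))"

lemma stationary_iff_balanced_on:
  "stationary R \<kappa> \<Gamma> \<pi> \<longleftrightarrow>
     (\<forall>x. \<pi> x \<ge> 0) \<and> (\<forall>x. x \<notin> \<Gamma> \<longrightarrow> \<pi> x = 0) \<and> (\<pi> has_sum 1) \<Gamma> \<and> balanced_on R \<kappa> \<pi> \<Gamma>"
  unfolding stationary_def balanced_on_def inflow_def ..

lemma intensity_nonneg: "\<kappa> r \<ge> 0 \<Longrightarrow> intensity \<kappa> r x \<ge> 0"
  unfolding intensity_def by auto

lemma intensity_pos: "\<kappa> r > 0 \<Longrightarrow> cle (fst r) x \<Longrightarrow> intensity \<kappa> r x > 0"
  unfolding intensity_def by auto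

lemma cle_if_intensity_pos: "intensity \<kappa> r x > 0 \<Longrightarrow> cle (fst r) x"
  unfolding intensity_def by (auto split: if_splits)

lemma stepI: "r \<in> R \<Longrightarrow> \<kappa> r > 0 \<Longrightarrow> cle (fst r) x \<Longrightarrow> y = fire r x \<Longrightarrow> step R \<kappa> x y"
  unfolding step_def using intensity_pos by blast

lemma reach_stepI: "step R \<kappa> x y \<Longrightarrow> reach R \<kappa> y z \<Longrightarrow> reach R \<kappa> x z"
  unfolding reach_def by (rule converse_rtranclp_into_rtranclp)

lemma finite_level: "finite (level N)"
proof -
  have "level N \<subseteq> {0..N} \<times> {0..N}" by (auto simp: level_def)
  then show ?thesis by (rule finite_subset) auto
qed

lemma hub_in_level: "(N, 0) \<in> level N"
  by (simp add: level_def)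

lemma reach_conservative:
  assumes "conservative R" "reach R \<kappa> x y"
  shows "fst y + snd y = fst x + snd x"
  using assms(2) unfolding reach_def
proof (induction rule: rtranclp_induct)
  case (step y z)
  then show ?case using assms(1)
    by (auto simp: step_def conservative_def fire_def cle_def dest!: cle_if_intensity_pos)
qed simp

lemma step_reverse:
  assumes "reversible R" "\<forall>r\<in>R. \<kappa> r > 0" "step R \<kappa> x y"
  shows "step R \<kappa> y x"
proof -
  obtain r where r: "r \<in> R" "intensity \<kappa> r x > 0" "y = fire r x"
    using assms(3) unfolding step_def by blast
  have "cle (fst r) x" using cle_if_intensity_pos r(2) .
  then show ?thesis
    using assms(1,2) r by (intro stepI[of "prod.swap r"]) (auto simp: reversible_def cle_def fire_def)
qed

lemma reach_sym:
  assumes "reversible R" "\<forall>r\<in>R. \<kappa> r > 0" "reach R \<kappa> x y"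
  shows "reach R \<kappa> y x"
  using assms(3) unfolding reach_def
proof (induction rule: rtranclp_induct)
  case (step y z)
  then show ?case using step_reverse[OF assms(1,2)] by (meson converse_rtranclp_into_rtranclp)
qed simp

lemma irreducible_component_level:
  assumes "reversible R" "conservative R" "\<forall>r\<in>R. \<kappa> r > 0"
    and hub: "\<forall>x\<in>level N. reach R \<kappa> x (N, 0)"
  shows "irreducible_component R \<kappa> (level N)"
  unfolding irreducible_component_def
proof (intro conjI ballI allI impI)
  show "level N \<noteq> {}" using hub_in_level by blast
  show "y \<in> level N" if "x \<in> level N" "reach R \<kappa> x y" for x y
    using that reach_conservative[OF assms(2)] by (auto simp: level_def)
  show "reach R \<kappa> x y" if "x \<in> level N" "y \<in> level N" for x y
    using that hub reach_sym[OF assms(1,3)] unfolding reach_def by (meson rtranclp_trans)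
qed

lemma finite_irreducible_component:
  assumes "conservative R" "irreducible_component R \<kappa> \<Gamma>"
  shows "finite \<Gamma>"
proof -
  obtain x0 where x0: "x0 \<in> \<Gamma>" using assms(2) unfolding irreducible_component_def by blast
  have "\<Gamma> \<subseteq> level (fst x0 + snd x0)"
    using assms x0 reach_conservative unfolding irreducible_component_def level_def by blast
  then show ?thesis using finite_level finite_subset by blast
qed

lemma harmonic_constant_on_irreducible_component:
  fixes h :: "state \<Rightarrow> real"
  assumes R: "finite R" "\<forall>r\<in>R. \<kappa> r > 0"
    and irr: "irreducible_component R \<kappa> \<Gamma>" and fin: "finite \<Gamma>"
    and harmonic: "\<And>y. y \<in> \<Gamma> \<Longrightarrow> (\<Sum>r\<in>R. intensity \<kappa> r y * (h y - h (fire r y))) = 0"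
  shows "\<exists>M. \<forall>x\<in>\<Gamma>. h x = M"
proof -
  have closed: "\<And>x y. x \<in> \<Gamma> \<Longrightarrow> reach R \<kappa> x y \<Longrightarrow> y \<in> \<Gamma>"
    and connected: "\<And>x y. x \<in> \<Gamma> \<Longrightarrow> y \<in> \<Gamma> \<Longrightarrow> reach R \<kappa> x y"
    and "\<Gamma> \<noteq> {}"
    using irr unfolding irreducible_component_def by blast+
  define M where "M = Max (h ` \<Gamma>)"
  have le_M: "h x \<le> M" if "x \<in> \<Gamma>" for x
    unfolding M_def using fin that by simp
  have "M \<in> h ` \<Gamma>"
    unfolding M_def using fin \<open>\<Gamma> \<noteq> {}\<close> by (intro Max_in) auto
  then obtain y0 where y0: "y0 \<in> \<Gamma>" "h y0 = M" by blast
  have step_M: "h z = M" if y: "y \<in> \<Gamma>" "h y = M" and "step R \<kappa> y z" for y z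
  proof -
    obtain r where r: "r \<in> R" "intensity \<kappa> r y > 0" "z = fire r y"
      using \<open>step R \<kappa> y z\<close> unfolding step_def by blast
    have nonneg: "intensity \<kappa> r' y * (h y - h (fire r' y)) \<ge> 0" if "r' \<in> R" for r'
    proof (cases "intensity \<kappa> r' y > 0")
      case True
      then have "step R \<kappa> y (fire r' y)" using that unfolding step_def by blast
      then have "reach R \<kappa> y (fire r' y)" unfolding reach_def by (rule r_into_rtranclp)
      then have "fire r' y \<in> \<Gamma>" using closed y(1) by blast
      then show ?thesis using True le_M y(2) by simp
    next
      case False
      then have "intensity \<kappa> r' y = 0" using R(2) that intensity_nonneg[of \<kappa> r' y] by force
      then show ?thesis by simp
    qed
    have "\<forall>r'\<in>R. intensity \<kappa> r' y * (h y - h (fire r' y)) = 0"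
      using sum_nonneg_eq_0_iff[OF R(1), of "\<lambda>r'. intensity \<kappa> r' y * (h y - h (fire r' y))"]
        nonneg harmonic[OF y(1)] by simp
    then have "intensity \<kappa> r y * (h y - h z) = 0" using r(1,3) by blast
    then show ?thesis using r(2) y(2) by simp
  qed
  have "h z = M" if "reach R \<kappa> y0 z" for z
    using that unfolding reach_def
  proof (induction rule: rtranclp_induct)
    case (step z z')
    have "z \<in> \<Gamma>" using closed[OF y0(1)] step(1) unfolding reach_def .
    then show ?case using step_M step by blast
  qed (use y0 in simp)
  then show ?thesis using connected[OF y0(1)] by blast
qed

lemma inflow_reversible:
  assumes "reversible R"
  shows "inflow R \<kappa> w y =
    (\<Sum>r\<in>R. if cle (fst r) y then w (fire r y) * intensity \<kappa> (prod.swap r) (fire r y) else 0)"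
  unfolding inflow_def
  by (rule sum.reindex_bij_witness[of _ prod.swap prod.swap])
    (use assms in \<open>auto simp: reversible_def fire_def Let_def\<close>)

text \<open>With a detailed-balanced weight \<open>\<mu>\<close>, the global balance equation for \<open>\<pi>\<close> says exactly
  that \<open>\<pi> / \<mu>\<close> is harmonic for the chain, hence constant on an irreducible class.\<close>
lemma stationary_eq_detailed_balanced_weight:
  fixes \<mu> :: "state \<Rightarrow> real"
  assumes R: "finite R" "reversible R" "\<forall>r\<in>R. \<kappa> r > 0"
    and \<mu>_pos: "\<forall>x. \<mu> x > 0"
    and detailed: "\<forall>r\<in>R. \<forall>y. cle (fst r) y \<longrightarrow>
               \<mu> y * intensity \<kappa> r y = \<mu> (fire r y) * intensity \<kappa> (prod.swap r) (fire r y)"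
    and irr: "irreducible_component R \<kappa> \<Gamma>" and fin: "finite \<Gamma>"
    and stat: "stationary R \<kappa> \<Gamma> \<pi>"
  shows "\<forall>x\<in>\<Gamma>. \<pi> x = \<mu> x / sum \<mu> \<Gamma>"
proof -
  define h where "h x = \<pi> x / \<mu> x" for x
  have \<pi>_eq: "\<pi> x = h x * \<mu> x" for x
    using \<mu>_pos[rule_format, of x] by (simp add: h_def)
  have "(\<Sum>r\<in>R. intensity \<kappa> r y * (h y - h (fire r y))) = 0" if y: "y \<in> \<Gamma>" for y
  proof -
    have "inflow R \<kappa> \<pi> y = (\<Sum>r\<in>R. \<mu> y * (intensity \<kappa> r y * h (fire r y)))"
      unfolding inflow_reversible[OF R(2)]
    proof (rule sum.cong[OF refl])
      fix r assume r: "r \<in> R"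
      show "(if cle (fst r) y then \<pi> (fire r y) * intensity \<kappa> (prod.swap r) (fire r y) else 0) =
            \<mu> y * (intensity \<kappa> r y * h (fire r y))"
      proof (cases "cle (fst r) y")
        case True
        have "\<pi> (fire r y) * intensity \<kappa> (prod.swap r) (fire r y) =
              h (fire r y) * (\<mu> (fire r y) * intensity \<kappa> (prod.swap r) (fire r y))"
          by (simp add: \<pi>_eq)
        also have "\<dots> = h (fire r y) * (\<mu> y * intensity \<kappa> r y)"
          using detailed r True by (metis (no_types))
        finally show ?thesis using True by simp
      qed (simp add: intensity_def)
    qed
    also have "inflow R \<kappa> \<pi> y = (\<Sum>r\<in>R. \<mu> y * (intensity \<kappa> r y * h y))"
      using stat y unfolding stationary_iff_balanced_on balanced_on_def
      by (simp add: \<pi>_eq sum_distrib_left mult_ac)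
    finally have "\<mu> y * (\<Sum>r\<in>R. intensity \<kappa> r y * (h y - h (fire r y))) = 0"
      by (simp add: sum_distrib_left right_diff_distrib sum_subtractf)
    then show ?thesis using \<mu>_pos[rule_format, of y] by simp
  qed
  then obtain M where M: "\<forall>x\<in>\<Gamma>. h x = M"
    using harmonic_constant_on_irreducible_component[OF R(1,3) irr fin] by blast
  have "(\<pi> has_sum 1) \<Gamma>" using stat unfolding stationary_def by blast
  then have "1 = sum \<pi> \<Gamma>" unfolding has_sum_finite_iff[OF fin] .
  also have "\<dots> = M * sum \<mu> \<Gamma>"
    using M by (simp add: \<pi>_eq sum_distrib_left)
  finally have M_sum: "M * sum \<mu> \<Gamma> = 1" by (rule sym)
  then have "sum \<mu> \<Gamma> \<noteq> 0" by (metis mult_zero_right zero_neq_one)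
  with M_sum have "M = 1 / sum \<mu> \<Gamma>" by (simp add: eq_divide_eq)
  then show ?thesis using M by (simp add: \<pi>_eq)
qed

lemma poisson_weight_pos: "fst c > 0 \<Longrightarrow> snd c > 0 \<Longrightarrow> poisson_weight c x > 0"
  by (simp add: poisson_weight_def)

lemma poisson_weight_detailed_balance:
  assumes pair: "\<kappa> r * cpow c (fst r) = \<kappa> (prod.swap r) * cpow c (snd r)"
    and "cle (fst r) y"
  shows "poisson_weight c y * intensity \<kappa> r y =
         poisson_weight c (fire r y) * intensity \<kappa> (prod.swap r) (fire r y)"
proof -
  obtain n1 n2 m1 m2 where r: "r = ((n1, n2), (m1, m2))" by (cases r) auto
  obtain d1 d2 where y: "y = (n1 + d1, n2 + d2)"
    using \<open>cle (fst r) y\<close> unfolding r cle_def by (cases y) (auto simp: le_iff_add)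
  have "poisson_weight c y * intensity \<kappa> r y =
        \<kappa> r * cpow c (n1, n2) * (fst c ^ d1 * snd c ^ d2) / (fact d1 * fact d2)"
    by (simp add: poisson_weight_def intensity_def cle_def cpow_def r y power_add field_simps)
  also have "\<dots> = \<kappa> (prod.swap r) * cpow c (m1, m2) * (fst c ^ d1 * snd c ^ d2) / (fact d1 * fact d2)"
    using pair by (simp add: r)
  also have "\<dots> = poisson_weight c (fire r y) * intensity \<kappa> (prod.swap r) (fire r y)"
    by (simp add: poisson_weight_def intensity_def cle_def cpow_def fire_def r y power_add field_simps)
  finally show ?thesis .
qed

lemma detailed_balanced_imp_product_form:
  assumes R: "finite R" "reversible R" "conservative R" "\<forall>r\<in>R. \<kappa> r > 0"
    and "detailed_balanced R \<kappa>"
  shows "product_form R \<kappa>"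
proof -
  obtain c where c: "fst c > 0" "snd c > 0"
    and pair: "\<forall>r\<in>R. \<kappa> r * cpow c (fst r) = \<kappa> (prod.swap r) * cpow c (snd r)"
    using \<open>detailed_balanced R \<kappa>\<close> unfolding detailed_balanced_def by blast
  have \<mu>_pos: "\<forall>x. poisson_weight c x > 0" using poisson_weight_pos c by blast
  have weights: "\<exists>Z>0. \<forall>\<pi>. stationary R \<kappa> \<Gamma> \<pi> \<longrightarrow>
          (\<forall>x\<in>\<Gamma>. \<pi> x = fst c ^ fst x / fact (fst x) * (snd c ^ snd x / fact (snd x)) / Z)"
    if "pos_rec_component R \<kappa> \<Gamma>" for \<Gamma>
  proof (intro exI conjI allI impI)
    have irr: "irreducible_component R \<kappa> \<Gamma>"
      using that unfolding pos_rec_component_def by blast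
    then have fin: "finite \<Gamma>" and "\<Gamma> \<noteq> {}"
      using finite_irreducible_component[OF R(3)] unfolding irreducible_component_def by blast+
    then show "sum (poisson_weight c) \<Gamma> > 0" using \<mu>_pos by (intro sum_pos) auto
    fix \<pi> assume "stationary R \<kappa> \<Gamma> \<pi>"
    then show "\<forall>x\<in>\<Gamma>. \<pi> x =
        fst c ^ fst x / fact (fst x) * (snd c ^ snd x / fact (snd x)) / sum (poisson_weight c) \<Gamma>"
      using stationary_eq_detailed_balanced_weight[OF R(1,2,4) \<mu>_pos _ irr fin]
        poisson_weight_detailed_balance pair
      unfolding poisson_weight_def by blast
  qed
  show ?thesis
    unfolding product_form_def
    by (rule exI[of _ "\<lambda>n. fst c ^ n / fact n"], rule exI[of _ "\<lambda>n. snd c ^ n / fact n"])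
      (use c weights in simp)
qed

lemma stationary_normalized_on_level:
  assumes "conservative R"
    and pos: "\<forall>x\<in>level N. w x > 0" and bal: "balanced_on R \<kappa> w (level N)"
  shows "stationary R \<kappa> (level N) (\<lambda>x. if x \<in> level N then w x / sum w (level N) else 0)"
    (is "stationary R \<kappa> _ ?\<pi>")
proof -
  let ?S = "sum w (level N)"
  have S_pos: "?S > 0"
    using finite_level hub_in_level pos by (intro sum_pos) auto
  have nonneg: "?\<pi> x \<ge> 0" for x
    using pos S_pos by (cases "x \<in> level N") auto
  have "sum ?\<pi> (level N) = (\<Sum>x\<in>level N. w x / ?S)"
    by (rule sum.cong) auto
  also have "\<dots> = 1"
    using S_pos by (simp add: sum_divide_distrib[symmetric])
  finally have has_sum: "(?\<pi> has_sum 1) (level N)"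
    unfolding has_sum_finite_iff[OF finite_level] by (rule sym)
  have source_in_level: "(fst y - fst (snd r) + fst (fst r), snd y - snd (snd r) + snd (fst r)) \<in> level N"
    if "y \<in> level N" "r \<in> R" "cle (snd r) y" for y r
  proof -
    have "fst (fst r) + snd (fst r) = fst (snd r) + snd (snd r)"
      using \<open>conservative R\<close> \<open>r \<in> R\<close> unfolding conservative_def by blast
    then show ?thesis using that(1,3) by (simp add: level_def cle_def)
  qed
  have "inflow R \<kappa> ?\<pi> y = inflow R \<kappa> w y / ?S" if "y \<in> level N" for y
    unfolding inflow_def sum_divide_distrib
    by (rule sum.cong) (auto simp: Let_def source_in_level[OF that])
  then have "balanced_on R \<kappa> ?\<pi> (level N)"
    using bal unfolding balanced_on_def by auto
  moreover have "\<forall>x. x \<notin> level N \<longrightarrow> ?\<pi> x = 0"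
    by simp
  ultimately show ?thesis
    unfolding stationary_iff_balanced_on using nonneg has_sum by blast
qed

lemma product_formE:
  assumes "product_form R \<kappa>"
  obtains f1 f2 :: "nat \<Rightarrow> real" where
    "\<And>\<Gamma> \<pi>. pos_rec_component R \<kappa> \<Gamma> \<Longrightarrow> stationary R \<kappa> \<Gamma> \<pi> \<Longrightarrow>
       \<exists>Z>0. \<forall>x\<in>\<Gamma>. \<pi> x = f1 (fst x) * f2 (snd x) / Z"
proof -
  obtain f1 f2 :: "nat \<Rightarrow> real" where f: "\<forall>\<Gamma>. pos_rec_component R \<kappa> \<Gamma> \<longrightarrow>
      (\<exists>Z>0. \<forall>\<pi>. stationary R \<kappa> \<Gamma> \<pi> \<longrightarrow> (\<forall>x\<in>\<Gamma>. \<pi> x = f1 (fst x) * f2 (snd x) / Z))"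
    using assms unfolding product_form_def by (elim exE conjE) blast
  show thesis
  proof (rule that)
    fix \<Gamma> \<pi> assume "pos_rec_component R \<kappa> \<Gamma>" "stationary R \<kappa> \<Gamma> \<pi>"
    then show "\<exists>Z>0. \<forall>x\<in>\<Gamma>. \<pi> x = f1 (fst x) * f2 (snd x) / Z"
      using f by blast
  qed
qed

lemma product_form_level:
  assumes R: "reversible R" "conservative R" "\<forall>r\<in>R. \<kappa> r > 0"
    and hub: "\<forall>x\<in>level N. reach R \<kappa> x (N, 0)"
    and pos: "\<forall>x\<in>level N. w x > 0" and bal: "balanced_on R \<kappa> w (level N)"
    and product: "\<And>\<Gamma> \<pi>. pos_rec_component R \<kappa> \<Gamma> \<Longrightarrow> stationary R \<kappa> \<Gamma> \<pi> \<Longrightarrow>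
       \<exists>Z>0. \<forall>x\<in>\<Gamma>. \<pi> x = f1 (fst x) * f2 (snd x) / Z"
  shows "\<exists>t. \<forall>x\<in>level N. w x = t * (f1 (fst x) * f2 (snd x))"
proof -
  let ?S = "sum w (level N)"
  have stat: "stationary R \<kappa> (level N) (\<lambda>x. if x \<in> level N then w x / ?S else 0)"
    using stationary_normalized_on_level[OF R(2) pos bal] .
  moreover have "irreducible_component R \<kappa> (level N)"
    using irreducible_component_level[OF R hub] .
  ultimately have "pos_rec_component R \<kappa> (level N)"
    unfolding pos_rec_component_def by blast
  then obtain Z where "Z > 0" and Z: "\<forall>x\<in>level N. w x / ?S = f1 (fst x) * f2 (snd x) / Z"
    using product[OF _ stat] by auto
  have "?S > 0"
    using finite_level hub_in_level pos by (intro sum_pos) auto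
  then have "\<forall>x\<in>level N. w x = ?S / Z * (f1 (fst x) * f2 (snd x))"
    using Z \<open>Z > 0\<close> by (auto simp: field_simps)
  then show ?thesis by blast
qed

lemma level_1: "level 1 = {(0, 1), (1, 0)}"
  by (auto simp: level_def)

lemma level_2: "level 2 = {(0, 2), (1, 1), (2, 0)}"
  by (auto simp: level_def)

lemma level_3: "level 3 = {(0, 3), (1, 2), (2, 1), (3, 0)}"
  by (auto simp: level_def)

lemma level_4: "level 4 = {(0, 4), (1, 3), (2, 2), (3, 1), (4, 0)}"
  by (auto simp: level_def)

lemma complex_balanced_iff_sum_if:
  assumes "finite R"
  shows "complex_balanced R \<kappa> \<longleftrightarrow> (\<exists>c. fst c > 0 \<and> snd c > 0 \<and> (\<forall>\<eta>\<in>complexes R.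
     (\<Sum>r\<in>R. if snd r = \<eta> then \<kappa> r * cpow c (fst r) else 0) =
     (\<Sum>r\<in>R. if fst r = \<eta> then \<kappa> r * cpow c \<eta> else 0)))"
  unfolding complex_balanced_def sum.inter_filter[OF assms] ..

lemma W3_network: "finite W3" "reversible W3" "conservative W3"
  by (auto simp: W3_def reversible_def conservative_def)

lemma W3_reach_hub:
  assumes "\<forall>r\<in>W3. \<kappa> r > 0"
  shows "reach W3 \<kappa> (p, q) (p + q, 0)"
proof (induction q arbitrary: p)
  case (Suc q)
  have "step W3 \<kappa> (p, Suc q) (Suc p, q)"
    using assms by (intro stepI[of "((0, 1), (1, 0))"]) (auto simp: W3_def cle_def fire_def)
  then show ?case using Suc.IH[of "Suc p"] by (simp add: reach_stepI)
qed (simp add: reach_def)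

lemma W3_hub: "\<forall>r\<in>W3. \<kappa> r > 0 \<Longrightarrow> \<forall>x\<in>level N. reach W3 \<kappa> x (N, 0)"
  using W3_reach_hub by (force simp: level_def)

lemma W3_complex_balanced_imp_detailed_balanced:
  assumes "complex_balanced W3 \<kappa>"
  shows "detailed_balanced W3 \<kappa>"
proof -
  obtain c where c: "fst c > 0" "snd c > 0" and bal: "\<forall>\<eta>\<in>complexes W3.
      (\<Sum>r\<in>W3. if snd r = \<eta> then \<kappa> r * cpow c (fst r) else 0) =
      (\<Sum>r\<in>W3. if fst r = \<eta> then \<kappa> r * cpow c \<eta> else 0)"
    using assms unfolding complex_balanced_iff_sum_if[OF W3_network(1)] by blast
  have "(1, 0) \<in> complexes W3" "(2, 0) \<in> complexes W3"
    by (auto simp: complexes_def W3_def)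
  then have "\<kappa> ((0, 1), (1, 0)) * snd c = \<kappa> ((1, 0), (0, 1)) * fst c"
    and "\<kappa> ((0, 2), (2, 0)) * snd c ^ 2 = \<kappa> ((2, 0), (0, 2)) * fst c ^ 2"
    using bal by (auto simp: W3_def cpow_def)
  then show ?thesis
    unfolding detailed_balanced_def using c by (intro exI[of _ c]) (auto simp: W3_def cpow_def)
qed

lemma W3_complex_balanced_if:
  assumes "\<alpha> > 0" "\<beta> > 0"
    and rates: "\<kappa> ((1, 0), (0, 1)) = \<alpha>" "\<kappa> ((0, 1), (1, 0)) = \<beta>"
      "\<kappa> ((2, 0), (0, 2)) = l1" "\<kappa> ((0, 2), (2, 0)) = l2"
    and "\<alpha>\<^sup>2 * l2 = \<beta>\<^sup>2 * l1"
  shows "complex_balanced W3 \<kappa>"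
  unfolding complex_balanced_iff_sum_if[OF W3_network(1)]
proof (intro exI[of _ "(\<beta>, \<alpha>)"] conjI)
  show "\<forall>\<eta>\<in>complexes W3.
      (\<Sum>r\<in>W3. if snd r = \<eta> then \<kappa> r * cpow (\<beta>, \<alpha>) (fst r) else 0) =
      (\<Sum>r\<in>W3. if fst r = \<eta> then \<kappa> r * cpow (\<beta>, \<alpha>) \<eta> else 0)"
    using assms rates[simplified] by (auto simp: complexes_def W3_def cpow_def mult_ac)
qed (use assms in simp_all)

text \<open>On each level, proportional to the spanning-tree sums of the Markov chain tree theorem, hence
  an unnormalized stationary distribution there.\<close>
definition W3_weight :: "real \<Rightarrow> real \<Rightarrow> real \<Rightarrow> real \<Rightarrow> state \<Rightarrow> real" where
  "W3_weight \<alpha> \<beta> l1 l2 x =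
    (if x = (0, 1) then \<alpha> else
     if x = (1, 0) then \<beta> else
     if x = (0, 2) then \<alpha>^2 + \<alpha>*l1 + \<beta>*l1 else
     if x = (1, 1) then 2*\<alpha>*\<beta> + 2*\<alpha>*l2 + 2*\<beta>*l1 else
     if x = (2, 0) then \<alpha>*l2 + \<beta>^2 + \<beta>*l2 else
     if x = (0, 3) then \<alpha>^3 + 3*\<alpha>^2*l1 + 3*\<alpha>*\<beta>*l1 + 2*\<alpha>*l1^2 + 2*\<alpha>*l1*l2 + 4*\<beta>*l1^2 else
     if x = (1, 2) then 3*\<alpha>^2*\<beta> + 6*\<alpha>^2*l2 + 9*\<alpha>*\<beta>*l1 + 12*\<alpha>*l1*l2 + 3*\<beta>^2*l1 + 6*\<beta>*l1^2
                        + 6*\<beta>*l1*l2 else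
     if x = (2, 1) then 3*\<alpha>^2*l2 + 3*\<alpha>*\<beta>^2 + 9*\<alpha>*\<beta>*l2 + 6*\<alpha>*l1*l2 + 6*\<alpha>*l2^2 + 6*\<beta>^2*l1
                        + 12*\<beta>*l1*l2 else
     if x = (3, 0) then 3*\<alpha>*\<beta>*l2 + 4*\<alpha>*l2^2 + \<beta>^3 + 3*\<beta>^2*l2 + 2*\<beta>*l1*l2 + 2*\<beta>*l2^2 else 0)"

lemma W3_weight_pos:
  assumes "\<alpha> > 0" "\<beta> > 0" "l1 > 0" "l2 > 0"
  shows "\<forall>x\<in>level 1. W3_weight \<alpha> \<beta> l1 l2 x > 0"
    and "\<forall>x\<in>level 2. W3_weight \<alpha> \<beta> l1 l2 x > 0"
    and "\<forall>x\<in>level 3. W3_weight \<alpha> \<beta> l1 l2 x > 0"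
  unfolding level_1 level_2 level_3
  by (simp_all add: W3_weight_def)
    (intro conjI add_pos_pos mult_pos_pos zero_less_power; simp add: assms)+

lemma W3_weight_balanced:
  assumes rates: "\<kappa> ((1, 0), (0, 1)) = \<alpha>" "\<kappa> ((0, 1), (1, 0)) = \<beta>"
      "\<kappa> ((2, 0), (0, 2)) = l1" "\<kappa> ((0, 2), (2, 0)) = l2"
  shows "balanced_on W3 \<kappa> (W3_weight \<alpha> \<beta> l1 l2) (level 1)"
    and "balanced_on W3 \<kappa> (W3_weight \<alpha> \<beta> l1 l2) (level 2)"
    and "balanced_on W3 \<kappa> (W3_weight \<alpha> \<beta> l1 l2) (level 3)"
  unfolding balanced_on_def inflow_def level_1 level_2 level_3
  by (simp_all add: W3_def intensity_def cle_def W3_weight_def fact_numeral rates rates[simplified])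
    ((intro conjI)?; algebra)+

lemma W3_weight_cross_ratio:
  "W3_weight \<alpha> \<beta> l1 l2 (1, 2) * W3_weight \<alpha> \<beta> l1 l2 (2, 0) * W3_weight \<alpha> \<beta> l1 l2 (0, 1) -
   W3_weight \<alpha> \<beta> l1 l2 (2, 1) * W3_weight \<alpha> \<beta> l1 l2 (0, 2) * W3_weight \<alpha> \<beta> l1 l2 (1, 0) =
   6 * (\<alpha>\<^sup>2 * l2 - \<beta>\<^sup>2 * l1) * (\<alpha>\<^sup>2 * l2 + 2 * \<alpha> * l1 * l2 + \<beta>\<^sup>2 * l1 + 2 * \<beta> * l1 * l2)"
  by (simp add: W3_weight_def) algebra

lemma W3_product_form_imp_rate_condition:
  assumes pos: "\<forall>r\<in>W3. \<kappa> r > 0" and "product_form W3 \<kappa>"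
  shows "(\<kappa> ((1, 0), (0, 1)))\<^sup>2 * \<kappa> ((0, 2), (2, 0)) =
         (\<kappa> ((0, 1), (1, 0)))\<^sup>2 * \<kappa> ((2, 0), (0, 2))"
proof -
  define \<alpha> \<beta> l1 l2 where "\<alpha> = \<kappa> ((1, 0), (0, 1))" and "\<beta> = \<kappa> ((0, 1), (1, 0))"
    and "l1 = \<kappa> ((2, 0), (0, 2))" and "l2 = \<kappa> ((0, 2), (2, 0))"
  note rates = \<alpha>_def[symmetric] \<beta>_def[symmetric] l1_def[symmetric] l2_def[symmetric]
  have rates_pos: "\<alpha> > 0" "\<beta> > 0" "l1 > 0" "l2 > 0"
    using pos by (simp_all add: W3_def \<alpha>_def \<beta>_def l1_def l2_def)
  let ?w = "W3_weight \<alpha> \<beta> l1 l2"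
  obtain f1 f2 where product: "\<And>\<Gamma> \<pi>. pos_rec_component W3 \<kappa> \<Gamma> \<Longrightarrow> stationary W3 \<kappa> \<Gamma> \<pi> \<Longrightarrow>
      \<exists>Z>0. \<forall>x\<in>\<Gamma>. \<pi> x = f1 (fst x) * f2 (snd x) / Z"
    using \<open>product_form W3 \<kappa>\<close> by (rule product_formE) blast
  note level_proportional =
    product_form_level[OF W3_network(2,3) pos W3_hub[OF pos] _ _ product]
  obtain t1 where t1: "\<forall>x\<in>level 1. ?w x = t1 * (f1 (fst x) * f2 (snd x))"
    using level_proportional W3_weight_pos(1)[OF rates_pos] W3_weight_balanced(1)[OF rates] by blast
  obtain t2 where t2: "\<forall>x\<in>level 2. ?w x = t2 * (f1 (fst x) * f2 (snd x))"
    using level_proportional W3_weight_pos(2)[OF rates_pos] W3_weight_balanced(2)[OF rates] by blast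
  obtain t3 where t3: "\<forall>x\<in>level 3. ?w x = t3 * (f1 (fst x) * f2 (snd x))"
    using level_proportional W3_weight_pos(3)[OF rates_pos] W3_weight_balanced(3)[OF rates] by blast
  have "?w (2, 1) * ?w (0, 2) * ?w (1, 0) = t3 * t2 * t1 * (f1 2 * f1 0 * f1 1) * (f2 1 * f2 2 * f2 0)"
    using t1 t2 t3 unfolding level_1 level_2 level_3 by simp
  also have "\<dots> = ?w (1, 2) * ?w (2, 0) * ?w (0, 1)"
    using t1 t2 t3 unfolding level_1 level_2 level_3 by simp
  finally have
    "6 * (\<alpha>\<^sup>2 * l2 - \<beta>\<^sup>2 * l1) * (\<alpha>\<^sup>2 * l2 + 2 * \<alpha> * l1 * l2 + \<beta>\<^sup>2 * l1 + 2 * \<beta> * l1 * l2) = 0"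
    unfolding W3_weight_cross_ratio[symmetric] by simp
  moreover have "\<alpha>\<^sup>2 * l2 + 2 * \<alpha> * l1 * l2 + \<beta>\<^sup>2 * l1 + 2 * \<beta> * l1 * l2 > 0"
    using rates_pos by (simp add: add_pos_pos)
  ultimately have "\<alpha>\<^sup>2 * l2 = \<beta>\<^sup>2 * l1"
    by simp
  then show ?thesis
    unfolding \<alpha>_def \<beta>_def l1_def l2_def .
qed

lemma W3_product_form_iff_complex_balanced:
  assumes pos: "\<forall>r\<in>W3. \<kappa> r > 0"
  shows "product_form W3 \<kappa> \<longleftrightarrow> complex_balanced W3 \<kappa>"
proof
  assume "complex_balanced W3 \<kappa>"
  then show "product_form W3 \<kappa>"
    using detailed_balanced_imp_product_form[OF W3_network pos]
      W3_complex_balanced_imp_detailed_balanced by blast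
next
  assume "product_form W3 \<kappa>"
  then show "complex_balanced W3 \<kappa>"
    using W3_complex_balanced_if[OF _ _ refl refl refl refl] W3_product_form_imp_rate_condition pos
    by (simp add: W3_def)
qed

lemma W4_network: "finite W4" "reversible W4" "conservative W4"
  by (auto simp: W4_def reversible_def conservative_def)

lemma W4_reach_hub:
  assumes pos: "\<forall>r\<in>W4. \<kappa> r > 0"
  shows "2 \<le> p + q \<Longrightarrow> reach W4 \<kappa> (p, q) (p + q, 0)"
proof (induction q arbitrary: p rule: less_induct)
  case (less q)
  consider "q = 0" | "q > 0" "p > 0" | "q \<ge> 2" "p = 0"
    using less.prems by linarith
  then show ?case
  proof cases
    case 1
    then show ?thesis by (simp add: reach_def)
  next
    case 2
    have "step W4 \<kappa> (p, q) (Suc p, q - 1)"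
      using pos 2 by (intro stepI[of "((1, 1), (2, 0))"]) (auto simp: W4_def cle_def fire_def)
    moreover have "reach W4 \<kappa> (Suc p, q - 1) (p + q, 0)"
      using less.IH[of "q - 1" "Suc p"] less.prems 2 by simp
    ultimately show ?thesis by (rule reach_stepI)
  next
    case 3
    then obtain m where m: "q = m + 2" by (metis le_add_diff_inverse2)
    have "step W4 \<kappa> (p, q) (2, m)"
      using pos 3 m by (intro stepI[of "((0, 2), (2, 0))"]) (auto simp: W4_def cle_def fire_def)
    moreover have "reach W4 \<kappa> (2, m) (2 + m, 0)"
      using less.IH[of m 2] m by simp
    ultimately show ?thesis using 3 m by (simp add: reach_stepI)
  qed
qed

lemma W4_hub: "\<forall>r\<in>W4. \<kappa> r > 0 \<Longrightarrow> 2 \<le> N \<Longrightarrow> \<forall>x\<in>level N. reach W4 \<kappa> x (N, 0)"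
  using W4_reach_hub by (force simp: level_def)

lemma W4_complex_balanced_imp_detailed_balanced:
  assumes "complex_balanced W4 \<kappa>"
  shows "detailed_balanced W4 \<kappa>"
proof -
  obtain c where c: "fst c > 0" "snd c > 0" and bal: "\<forall>\<eta>\<in>complexes W4.
      (\<Sum>r\<in>W4. if snd r = \<eta> then \<kappa> r * cpow c (fst r) else 0) =
      (\<Sum>r\<in>W4. if fst r = \<eta> then \<kappa> r * cpow c \<eta> else 0)"
    using assms unfolding complex_balanced_iff_sum_if[OF W4_network(1)] by blast
  have "(1, 1) \<in> complexes W4" "(0, 2) \<in> complexes W4"
    by (auto simp: complexes_def W4_def)
  then have "\<kappa> ((2, 0), (1, 1)) * fst c ^ 2 = \<kappa> ((1, 1), (2, 0)) * (fst c * snd c)"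
    and "\<kappa> ((2, 0), (0, 2)) * fst c ^ 2 = \<kappa> ((0, 2), (2, 0)) * snd c ^ 2"
    using bal by (auto simp: W4_def cpow_def)
  then show ?thesis
    unfolding detailed_balanced_def using c by (intro exI[of _ c]) (auto simp: W4_def cpow_def)
qed

lemma W4_complex_balanced_if:
  assumes "l3 > 0" "l5 > 0"
    and rates: "\<kappa> ((2, 0), (1, 1)) = l3" "\<kappa> ((1, 1), (2, 0)) = l5"
      "\<kappa> ((2, 0), (0, 2)) = l1" "\<kappa> ((0, 2), (2, 0)) = l2"
    and "l3\<^sup>2 * l2 = l5\<^sup>2 * l1"
  shows "complex_balanced W4 \<kappa>"
  unfolding complex_balanced_iff_sum_if[OF W4_network(1)]
proof (intro exI[of _ "(l5, l3)"] conjI)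
  show "\<forall>\<eta>\<in>complexes W4.
      (\<Sum>r\<in>W4. if snd r = \<eta> then \<kappa> r * cpow (l5, l3) (fst r) else 0) =
      (\<Sum>r\<in>W4. if fst r = \<eta> then \<kappa> r * cpow (l5, l3) \<eta> else 0)"
    using assms rates[simplified] by (auto simp: complexes_def W4_def cpow_def algebra_simps power2_eq_square)
qed (use assms in simp_all)

text \<open>As for W3, but on levels 2 to 4: no reaction of W4 can fire on level 1.\<close>
definition W4_weight :: "real \<Rightarrow> real \<Rightarrow> real \<Rightarrow> real \<Rightarrow> state \<Rightarrow> real" where
  "W4_weight l3 l5 l1 l2 x =
    (if x = (0, 2) then l5*l1 else
     if x = (1, 1) then 2*l3*l2 else
     if x = (2, 0) then l5*l2 else
     if x = (0, 3) then l3*l5*l1 + l3*l1*l2 + l5*l1^2 else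
     if x = (1, 2) then 3*l3^2*l2 + 3*l3*l1*l2 + 3*l5*l1*l2 else
     if x = (2, 1) then 3*l3*l5*l2 + 3*l3*l2^2 + 3*l5*l1*l2 else
     if x = (3, 0) then l3*l2^2 + l5^2*l2 + l5*l2^2 else
     if x = (0, 4) then 2*l3^2*l5*l1 + 4*l3^2*l1*l2 + 4*l3*l5*l1^2 + 4*l3*l1^2*l2 + l5^2*l1^2
                        + 2*l5*l1^3 + 2*l5*l1^2*l2 else
     if x = (1, 3) then 8*l3^3*l2 + 16*l3^2*l1*l2 + 20*l3*l5*l1*l2 + 8*l3*l1^2*l2 + 8*l3*l1*l2^2
                        + 16*l5*l1^2*l2 else
     if x = (2, 2) then 12*l3^2*l5*l2 + 24*l3^2*l2^2 + 24*l3*l5*l1*l2 + 24*l3*l1*l2^2 + 6*l5^2*l1*l2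
                        + 12*l5*l1^2*l2 + 12*l5*l1*l2^2 else
     if x = (3, 1) then 8*l3^2*l2^2 + 8*l3*l5^2*l2 + 20*l3*l5*l2^2 + 8*l3*l1*l2^2 + 8*l3*l2^3
                        + 8*l5^2*l1*l2 + 16*l5*l1*l2^2 else
     if x = (4, 0) then 4*l3*l5*l2^2 + 4*l3*l2^3 + 2*l5^3*l2 + 5*l5^2*l2^2 + 2*l5*l1*l2^2 + 2*l5*l2^3
     else 0)"

lemma W4_weight_pos:
  assumes "l3 > 0" "l5 > 0" "l1 > 0" "l2 > 0"
  shows "\<forall>x\<in>level 2. W4_weight l3 l5 l1 l2 x > 0"
    and "\<forall>x\<in>level 3. W4_weight l3 l5 l1 l2 x > 0"
    and "\<forall>x\<in>level 4. W4_weight l3 l5 l1 l2 x > 0"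
  unfolding level_2 level_3 level_4
  by (simp_all add: W4_weight_def)
    (intro conjI add_pos_pos mult_pos_pos zero_less_power; simp add: assms)+

lemma W4_weight_balanced:
  assumes rates: "\<kappa> ((2, 0), (1, 1)) = l3" "\<kappa> ((1, 1), (2, 0)) = l5"
      "\<kappa> ((2, 0), (0, 2)) = l1" "\<kappa> ((0, 2), (2, 0)) = l2"
  shows "balanced_on W4 \<kappa> (W4_weight l3 l5 l1 l2) (level 2)"
    and "balanced_on W4 \<kappa> (W4_weight l3 l5 l1 l2) (level 3)"
    and "balanced_on W4 \<kappa> (W4_weight l3 l5 l1 l2) (level 4)"
  unfolding balanced_on_def inflow_def level_2 level_3 level_4
  by (simp_all add: W4_def intensity_def cle_def W4_weight_def fact_numeral rates rates[simplified])
    ((intro conjI)?; algebra)+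

lemma W4_weight_cross_ratio:
  "W4_weight l3 l5 l1 l2 (2, 2) * W4_weight l3 l5 l1 l2 (3, 0) * W4_weight l3 l5 l1 l2 (1, 1) -
   W4_weight l3 l5 l1 l2 (3, 1) * W4_weight l3 l5 l1 l2 (1, 2) * W4_weight l3 l5 l1 l2 (2, 0) =
   12 * l2^3 * (l3\<^sup>2 * l2 - l5\<^sup>2 * l1) *
   (4 * l3\<^sup>2 * l2 + l3 * l5\<^sup>2 + 2 * l3 * l5 * l2 + 4 * l3 * l1 * l2 + 2 * l5\<^sup>2 * l1 + 4 * l5 * l1 * l2)"
  by (simp add: W4_weight_def) algebra

lemma W4_product_form_imp_rate_condition:
  assumes pos: "\<forall>r\<in>W4. \<kappa> r > 0" and "product_form W4 \<kappa>"
  shows "(\<kappa> ((2, 0), (1, 1)))\<^sup>2 * \<kappa> ((0, 2), (2, 0)) =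
         (\<kappa> ((1, 1), (2, 0)))\<^sup>2 * \<kappa> ((2, 0), (0, 2))"
proof -
  define l3 l5 l1 l2 where "l3 = \<kappa> ((2, 0), (1, 1))" and "l5 = \<kappa> ((1, 1), (2, 0))"
    and "l1 = \<kappa> ((2, 0), (0, 2))" and "l2 = \<kappa> ((0, 2), (2, 0))"
  note rates = l3_def[symmetric] l5_def[symmetric] l1_def[symmetric] l2_def[symmetric]
  have rates_pos: "l3 > 0" "l5 > 0" "l1 > 0" "l2 > 0"
    using pos by (simp_all add: W4_def l3_def l5_def l1_def l2_def)
  let ?w = "W4_weight l3 l5 l1 l2"
  obtain f1 f2 where product: "\<And>\<Gamma> \<pi>. pos_rec_component W4 \<kappa> \<Gamma> \<Longrightarrow> stationary W4 \<kappa> \<Gamma> \<pi> \<Longrightarrow>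
      \<exists>Z>0. \<forall>x\<in>\<Gamma>. \<pi> x = f1 (fst x) * f2 (snd x) / Z"
    using \<open>product_form W4 \<kappa>\<close> by (rule product_formE) blast
  note level_proportional =
    product_form_level[OF W4_network(2,3) pos W4_hub[OF pos] _ _ product]
  obtain t2 where t2: "\<forall>x\<in>level 2. ?w x = t2 * (f1 (fst x) * f2 (snd x))"
    using level_proportional W4_weight_pos(1)[OF rates_pos] W4_weight_balanced(1)[OF rates] by force
  obtain t3 where t3: "\<forall>x\<in>level 3. ?w x = t3 * (f1 (fst x) * f2 (snd x))"
    using level_proportional W4_weight_pos(2)[OF rates_pos] W4_weight_balanced(2)[OF rates] by force
  obtain t4 where t4: "\<forall>x\<in>level 4. ?w x = t4 * (f1 (fst x) * f2 (snd x))"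
    using level_proportional W4_weight_pos(3)[OF rates_pos] W4_weight_balanced(3)[OF rates] by force
  have "?w (3, 1) * ?w (1, 2) * ?w (2, 0) = t4 * t3 * t2 * (f1 3 * f1 1 * f1 2) * (f2 1 * f2 2 * f2 0)"
    using t2 t3 t4 unfolding level_2 level_3 level_4 by simp
  also have "\<dots> = ?w (2, 2) * ?w (3, 0) * ?w (1, 1)"
    using t2 t3 t4 unfolding level_2 level_3 level_4 by simp
  finally have "12 * l2^3 * (l3\<^sup>2 * l2 - l5\<^sup>2 * l1) *
      (4 * l3\<^sup>2 * l2 + l3 * l5\<^sup>2 + 2 * l3 * l5 * l2 + 4 * l3 * l1 * l2 + 2 * l5\<^sup>2 * l1 + 4 * l5 * l1 * l2) = 0"
    unfolding W4_weight_cross_ratio[symmetric] by simp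
  moreover have
    "4 * l3\<^sup>2 * l2 + l3 * l5\<^sup>2 + 2 * l3 * l5 * l2 + 4 * l3 * l1 * l2 + 2 * l5\<^sup>2 * l1 + 4 * l5 * l1 * l2 > 0"
    using rates_pos by (simp add: add_pos_pos)
  ultimately have "l3\<^sup>2 * l2 = l5\<^sup>2 * l1"
    using rates_pos by simp
  then show ?thesis
    unfolding l3_def l5_def l1_def l2_def .
qed

lemma W4_product_form_iff_complex_balanced:
  assumes pos: "\<forall>r\<in>W4. \<kappa> r > 0"
  shows "product_form W4 \<kappa> \<longleftrightarrow> complex_balanced W4 \<kappa>"
proof
  assume "complex_balanced W4 \<kappa>"
  then show "product_form W4 \<kappa>"
    using detailed_balanced_imp_product_form[OF W4_network pos]
      W4_complex_balanced_imp_detailed_balanced by blast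
next
  assume "product_form W4 \<kappa>"
  then show "complex_balanced W4 \<kappa>"
    using W4_complex_balanced_if[OF _ _ refl refl refl refl] W4_product_form_imp_rate_condition pos
    by (simp add: W4_def)
qed

theorem lemma4p3:
  shows "(\<forall>\<kappa>. (\<forall>r\<in>W3. \<kappa> r > 0) \<longrightarrow> (product_form W3 \<kappa> \<longleftrightarrow> complex_balanced W3 \<kappa>)) \<and>
         (\<forall>\<kappa>. (\<forall>r\<in>W4. \<kappa> r > 0) \<longrightarrow> (product_form W4 \<kappa> \<longleftrightarrow> complex_balanced W4 \<kappa>))"
  using W3_product_form_iff_complex_balanced W4_product_form_iff_complex_balanced by blast

end
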